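(* Let the data be orthogonally separable. Then there exists $\zeta\in(0,1)$ such that for every $k\in[K]$ and every $w\in\mathbb{R}^D\setminus\{0\}$ with $0<|\mathcal I_k^w|<|\mathcal I_k|$, $$\Big\|\sum_{i\in\mathcal I_k^w}x_i\Big\|^2-\big(\mathcal A_k^w\big)^2\ge\mu_sX_{\min}^2\,\zeta.$$
   Context: Data: $x_1,\dots,x_n\in\mathbb{R}^D\setminus\{0\}$ partitioned into classes with index sets $\mathcal I_1,\dots,\mathcal I_K$; $X_{\min}=\min_i\|x_i\|$. Orthogonal separability: there exist $\mu_s\in(0,1]$ and $\mu_d>0$ such that $\langle x_i,x_j\rangle\ge\mu_s\|x_i\|\|x_j\|$ whenever $i,j$ lie in the same class and $\langle x_i,x_j\rangle\le-\mu_d\|x_i\|\|x_j\|$ whenever they lie in different classes. For $w\ne0$: $\mathcal I_k^w=\{i\in\mathcal I_k:\langle x_i,w\rangle>0\}$ and $\mathcal A_k^w=\sum_{i\in\mathcal I_k^w}\langle x_i,w/\|w\|\rangle$. *)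

theory Defs
  imports "HOL-Analysis.Analysis"
begin

definition is_class_partition :: "nat \<Rightarrow> nat \<Rightarrow> (nat \<Rightarrow> nat set) \<Rightarrow> bool" where
  "is_class_partition n K I \<longleftrightarrow>
     (\<Union>k\<in>{1..K}. I k) = {..<n} \<and>
     (\<forall>k\<in>{1..K}. \<forall>l\<in>{1..K}. k \<noteq> l \<longrightarrow> I k \<inter> I l = {})"

definition orth_separable ::
  "(nat \<Rightarrow> 'a::real_inner) \<Rightarrow> nat \<Rightarrow> (nat \<Rightarrow> nat set) \<Rightarrow> real \<Rightarrow> real \<Rightarrow> bool" where
  "orth_separable x K I mu_s mu_d \<longleftrightarrow>
     0 < mu_s \<and> mu_s \<le> 1 \<and> 0 < mu_d \<and>
     (\<forall>k\<in>{1..K}. \<forall>i\<in>I k. \<forall>j\<in>I k.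
        inner (x i) (x j) \<ge> mu_s * norm (x i) * norm (x j)) \<and>
     (\<forall>k\<in>{1..K}. \<forall>l\<in>{1..K}. k \<noteq> l \<longrightarrow> (\<forall>i\<in>I k. \<forall>j\<in>I l.
        inner (x i) (x j) \<le> - mu_d * norm (x i) * norm (x j)))"

definition active_set :: "(nat \<Rightarrow> 'a::real_inner) \<Rightarrow> (nat \<Rightarrow> nat set) \<Rightarrow> nat \<Rightarrow> 'a \<Rightarrow> nat set" where
  "active_set x I k w = {i \<in> I k. inner (x i) w > 0}"

definition active_mass :: "(nat \<Rightarrow> 'a::real_inner) \<Rightarrow> (nat \<Rightarrow> nat set) \<Rightarrow> nat \<Rightarrow> 'a \<Rightarrow> real" where
  "active_mass x I k w = (\<Sum>i\<in>active_set x I k w. inner (x i) (w /\<^sub>R norm w))"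

definition X_min :: "(nat \<Rightarrow> 'a::real_normed_vector) \<Rightarrow> nat \<Rightarrow> real" where
  "X_min x n = Min ((\<lambda>i. norm (x i)) ` {..<n})"

end

theory Submission
  imports Defs
begin

text \<open>Let \<open>v\<close> be the sum of the active points of class \<open>k\<close>, \<open>u = w/\<parallel>w\<parallel>\<close>, and
  \<open>r = v - \<langle>v,u\<rangle>u\<close>, so that the left-hand side is \<open>\<parallel>r\<parallel>\<^sup>2\<close>. An inactive point \<open>x\<^sub>j\<close> of the
  same class has \<open>\<langle>x\<^sub>j,u\<rangle> \<le> 0 \<le> \<langle>v,u\<rangle>\<close>, hence \<open>\<langle>x\<^sub>j,v\<rangle> \<le> \<langle>x\<^sub>j,r\<rangle> \<le> \<parallel>x\<^sub>j\<parallel>\<parallel>r\<parallel>\<close>, while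
  same-class cohesion gives \<open>\<langle>x\<^sub>j,v\<rangle> \<ge> \<mu>\<^sub>s\<parallel>x\<^sub>j\<parallel>\<Sum>\<parallel>x\<^sub>i\<parallel>\<close>. Thus \<open>\<parallel>r\<parallel> \<ge> \<mu>\<^sub>s X\<^sub>m\<^sub>i\<^sub>n\<close>
  and \<open>\<zeta> = \<mu>\<^sub>s/2\<close> works (halved only so that \<open>\<zeta> < 1\<close> when \<open>\<mu>\<^sub>s = 1\<close>).\<close>

lemma norm_sq_minus_inner_sq_unit:
  fixes u v :: "'a::real_inner"
  assumes "norm u = 1"
  shows "(norm v)\<^sup>2 - (inner v u)\<^sup>2 = (norm (v - inner v u *\<^sub>R u))\<^sup>2"
proof -
  let ?r = "v - inner v u *\<^sub>R u"
  have "inner ?r u = 0"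
    using assms by (simp add: inner_diff_left power2_norm_eq_inner[symmetric])
  then have "(norm (?r + inner v u *\<^sub>R u))\<^sup>2 = (norm ?r)\<^sup>2 + (inner v u)\<^sup>2"
    using assms by (subst norm_add_Pythagorean) (auto simp: orthogonal_def power_mult_distrib)
  then show ?thesis by simp
qed

lemma inner_le_norm_mult_norm_orthogonal_part:
  fixes u v y :: "'a::real_inner"
  assumes "0 \<le> inner v u" and "inner y u \<le> 0"
  shows "inner y v \<le> norm y * norm (v - inner v u *\<^sub>R u)"
proof -
  have "inner y v = inner v u * inner y u + inner y (v - inner v u *\<^sub>R u)"
    by (simp add: inner_diff_right)
  also have "\<dots> \<le> inner y (v - inner v u *\<^sub>R u)"
    using assms by (simp add: mult_nonneg_nonpos)
  also have "\<dots> \<le> norm y * norm (v - inner v u *\<^sub>R u)"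
    by (rule order_trans[OF abs_ge_self Cauchy_Schwarz_ineq2])
  finally show ?thesis .
qed

lemma cohesive_inactive_bounds_orthogonal_part:
  fixes x :: "nat \<Rightarrow> 'a::real_inner" and w :: 'a
  assumes active: "\<And>i. i \<in> S \<Longrightarrow> 0 < inner (x i) w"
    and inactive: "inner (x j) w \<le> 0" and "x j \<noteq> 0"
    and cohesive: "\<And>i. i \<in> S \<Longrightarrow> mu * norm (x j) * norm (x i) \<le> inner (x j) (x i)"
  defines "u \<equiv> w /\<^sub>R norm w" and "v \<equiv> \<Sum>i\<in>S. x i"
  shows "mu * (\<Sum>i\<in>S. norm (x i)) \<le> norm (v - inner v u *\<^sub>R u)"
proof -
  have "0 \<le> (\<Sum>i\<in>S. inner (x i) w) / norm w"
    using active by (intro divide_nonneg_nonneg sum_nonneg) (auto intro: less_imp_le)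
  then have vu: "0 \<le> inner v u"
    unfolding u_def v_def by (simp add: inner_sum_left divide_inverse_commute)
  have ju: "inner (x j) u \<le> 0"
    using inactive unfolding u_def by (simp add: mult_nonneg_nonpos)
  have "norm (x j) * (mu * (\<Sum>i\<in>S. norm (x i))) = (\<Sum>i\<in>S. mu * norm (x j) * norm (x i))"
    by (simp add: sum_distrib_left mult.assoc mult.left_commute)
  also have "\<dots> \<le> (\<Sum>i\<in>S. inner (x j) (x i))"
    using cohesive by (rule sum_mono)
  also have "\<dots> = inner (x j) v"
    unfolding v_def by (simp add: inner_sum_right)
  also have "\<dots> \<le> norm (x j) * norm (v - inner v u *\<^sub>R u)"
    using vu ju by (rule inner_le_norm_mult_norm_orthogonal_part)
  finally show ?thesis
    using \<open>x j \<noteq> 0\<close> by simp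
qed

lemma active_mass_eq_inner_sum:
  "active_mass x I k w = inner (\<Sum>i\<in>active_set x I k w. x i) (w /\<^sub>R norm w)"
  unfolding active_mass_def by (simp add: inner_sum_left sum_distrib_left)

lemma active_gap_ge_cohesion:
  fixes x :: "nat \<Rightarrow> 'a::real_inner"
  assumes "0 \<le> mu"
    and cohesive: "\<forall>i\<in>I k. \<forall>j\<in>I k. mu * norm (x i) * norm (x j) \<le> inner (x i) (x j)"
    and "j \<in> I k" "j \<notin> active_set x I k w" "x j \<noteq> 0" "w \<noteq> 0"
  shows "(mu * (\<Sum>i\<in>active_set x I k w. norm (x i)))\<^sup>2
    \<le> (norm (\<Sum>i\<in>active_set x I k w. x i))\<^sup>2 - (active_mass x I k w)\<^sup>2"
proof -
  let ?S = "active_set x I k w"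
  let ?u = "w /\<^sub>R norm w" and ?v = "\<Sum>i\<in>?S. x i"
  have "mu * (\<Sum>i\<in>?S. norm (x i)) \<le> norm (?v - inner ?v ?u *\<^sub>R ?u)"
  proof (rule cohesive_inactive_bounds_orthogonal_part)
    show "inner (x j) w \<le> 0" "x j \<noteq> 0" using assms(3-5) unfolding active_set_def by auto
    show "\<And>i. i \<in> ?S \<Longrightarrow> 0 < inner (x i) w" unfolding active_set_def by auto
    fix i assume "i \<in> ?S"
    then show "mu * norm (x j) * norm (x i) \<le> inner (x j) (x i)"
      using cohesive \<open>j \<in> I k\<close> unfolding active_set_def by blast
  qed
  then have "(mu * (\<Sum>i\<in>?S. norm (x i)))\<^sup>2 \<le> (norm (?v - inner ?v ?u *\<^sub>R ?u))\<^sup>2"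
    by (rule power_mono) (simp add: \<open>0 \<le> mu\<close> sum_nonneg)
  also have "\<dots> = (norm ?v)\<^sup>2 - (inner ?v ?u)\<^sup>2"
    using \<open>w \<noteq> 0\<close> by (intro norm_sq_minus_inner_sq_unit[symmetric]) simp
  finally show ?thesis
    unfolding active_mass_eq_inner_sum .
qed

lemma X_min_le_norm:
  assumes "i < n"
  shows "X_min x n \<le> norm (x i)"
  unfolding X_min_def using assms by (intro Min_le) auto

lemma X_min_nonneg:
  assumes "0 < n"
  shows "0 \<le> X_min x n"
  unfolding X_min_def using assms by (subst Min_ge_iff) auto

theorem mainTheorem11:
  fixes x :: "nat \<Rightarrow> 'a::euclidean_space"
    and n K :: nat and I :: "nat \<Rightarrow> nat set" and mu_s mu_d :: real
  assumes nonzero: "\<forall>i<n. x i \<noteq> 0"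
    and partition: "is_class_partition n K I"
    and sep: "orth_separable x K I mu_s mu_d"
  shows "\<exists>\<zeta>::real. 0 < \<zeta> \<and> \<zeta> < 1 \<and>
    (\<forall>k\<in>{1..K}. \<forall>w::'a. w \<noteq> 0 \<longrightarrow>
       0 < card (active_set x I k w) \<longrightarrow> card (active_set x I k w) < card (I k) \<longrightarrow>
       (norm (\<Sum>i\<in>active_set x I k w. x i))\<^sup>2 - (active_mass x I k w)\<^sup>2
         \<ge> mu_s * (X_min x n)\<^sup>2 * \<zeta>)"
proof (intro exI[of _ "mu_s / 2"] conjI ballI allI impI)
  have mu_s: "0 < mu_s" "mu_s \<le> 1" using sep unfolding orth_separable_def by auto
  then show "0 < mu_s / 2" "mu_s / 2 < 1" by auto
  fix k w
  assume k: "k \<in> {1..K}" and "w \<noteq> 0"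
    and card: "0 < card (active_set x I k w)" "card (active_set x I k w) < card (I k)"
  have cohesive: "\<forall>i\<in>I k. \<forall>j\<in>I k. mu_s * norm (x i) * norm (x j) \<le> inner (x i) (x j)"
    using sep k unfolding orth_separable_def by auto
  have classes: "active_set x I k w \<subseteq> I k" "I k \<subseteq> {..<n}"
    using partition k unfolding active_set_def is_class_partition_def by auto
  obtain i0 where "i0 \<in> active_set x I k w" using card(1) by fastforce
  have "active_set x I k w \<noteq> I k" using card(2) by auto
  then obtain j where "j \<in> I k" "j \<notin> active_set x I k w" using classes(1) by blast
  have "i0 < n" using \<open>i0 \<in> active_set x I k w\<close> classes by blast
  have "X_min x n \<le> norm (x i0)" using \<open>i0 < n\<close> by (rule X_min_le_norm)
  also have "\<dots> \<le> (\<Sum>i\<in>active_set x I k w. norm (x i))"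
    using classes \<open>i0 \<in> active_set x I k w\<close> by (intro member_le_sum) (auto intro: finite_subset)
  finally have "(mu_s * X_min x n)\<^sup>2 \<le> (mu_s * (\<Sum>i\<in>active_set x I k w. norm (x i)))\<^sup>2"
    using X_min_nonneg[of n x] \<open>i0 < n\<close> mu_s(1) by (intro power_mono mult_left_mono) auto
  also have "\<dots> \<le> (norm (\<Sum>i\<in>active_set x I k w. x i))\<^sup>2 - (active_mass x I k w)\<^sup>2"
    using mu_s(1) cohesive \<open>j \<in> I k\<close> \<open>j \<notin> active_set x I k w\<close> nonzero classes \<open>w \<noteq> 0\<close>
    by (intro active_gap_ge_cohesion) auto
  finally have "(mu_s * X_min x n)\<^sup>2
      \<le> (norm (\<Sum>i\<in>active_set x I k w. x i))\<^sup>2 - (active_mass x I k w)\<^sup>2" .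
  moreover have "mu_s * (X_min x n)\<^sup>2 * (mu_s / 2) = (mu_s * X_min x n)\<^sup>2 / 2"
    by (simp add: power2_eq_square)
  ultimately show "mu_s * (X_min x n)\<^sup>2 * (mu_s / 2)
      \<le> (norm (\<Sum>i\<in>active_set x I k w. x i))\<^sup>2 - (active_mass x I k w)\<^sup>2"
    using zero_le_power2[of "mu_s * X_min x n"] by linarith
qed

end
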